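(* Let $(X,\tau)$ be a $\mathbb{B}$-topological space. (i) $(X,\tau)$ is $R_0$ if and only if both topological spaces $(X,\tau[tt])$ and $(X,\tau[ff])$ are $R_0$. (ii) $(X,\tau)$ is $T_1$ if and only if the topological space $(X,\tau[tt]\vee\tau[ff])$ is $T_0$ and both $(X,\tau[tt])$ and $(X,\tau[ff])$ are $R_0$.
   Context: $\mathbb{B}=\{0,1,tt,ff\}$ is the four-element Boolean algebra with bottom $0$, top $1$, and $tt,ff$ incomparable complements; $a\to b=\neg a\vee b$. A $\mathbb{B}$-topology on $X$ is $\tau\subseteq\mathbb{B}^X$ containing all constant maps and closed under arbitrary pointwise joins and finite pointwise meets; $\tau[b]=\{\lambda[b]:\lambda\in\tau\}$ with $\lambda[b]=\{x:\lambda(x)\ge b\}$, for $b\in\{tt,ff\}$, are topologies; $\tau[tt]\vee\tau[ff]$ is the topology generated by their union. Specialization $\mathbb{B}$-order: $\Omega(\tau)(x,y)=\bigwedge_{\lambda\in\tau}(\lambda(x)\to\lambda(y))$. $(X,\tau)$ is $R_0$ if $\Omega(\tau)(x,y)=\Omega(\tau)(y,x)$ for all $x,y$; $T_0$ if $\Omega(\tau)(x,y)=1=\Omega(\tau)(y,x)$ implies $x=y$; $T_1$ if both $T_0$ and $R_0$. A topological space is $R_0$ if every open set containing a point contains the closure of that point's singleton. *)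

theory Defs
  imports "HOL-Analysis.Analysis"
begin

datatype B4 = Bot | Top | TT | FF

fun bleq :: "B4 \<Rightarrow> B4 \<Rightarrow> bool" where
  "bleq Bot _ = True"
| "bleq _ Top = True"
| "bleq TT b = (b = TT)"
| "bleq FF b = (b = FF)"
| "bleq Top _ = False"

fun bneg :: "B4 \<Rightarrow> B4" where
  "bneg Bot = Top" | "bneg Top = Bot" | "bneg TT = FF" | "bneg FF = TT"

fun bjoin :: "B4 \<Rightarrow> B4 \<Rightarrow> B4" where
  "bjoin Bot b = b"
| "bjoin Top _ = Top"
| "bjoin TT b = (if bleq b TT then TT else Top)"
| "bjoin FF b = (if bleq b FF then FF else Top)"

fun bmeet :: "B4 \<Rightarrow> B4 \<Rightarrow> B4" where
  "bmeet Top b = b"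
| "bmeet Bot _ = Bot"
| "bmeet TT b = (if bleq TT b then TT else Bot)"
| "bmeet FF b = (if bleq FF b then FF else Bot)"

definition bimp :: "B4 \<Rightarrow> B4 \<Rightarrow> B4" where
  "bimp a b = bjoin (bneg a) b"

definition bSup :: "B4 set \<Rightarrow> B4" where
  "bSup S = (if S \<subseteq> {Bot} then Bot else if S \<subseteq> {Bot, TT} then TT
             else if S \<subseteq> {Bot, FF} then FF else Top)"

definition bInf :: "B4 set \<Rightarrow> B4" where
  "bInf S = (if S \<subseteq> {Top} then Top else if S \<subseteq> {Top, TT} then TT
             else if S \<subseteq> {Top, FF} then FF else Bot)"

text \<open>B-topology on the carrier UNIV of type 'a.\<close>
definition B_topology :: "('a \<Rightarrow> B4) set \<Rightarrow> bool" where
  "B_topology \<tau> \<longleftrightarrow>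
     (\<forall>b. (\<lambda>_. b) \<in> \<tau>) \<and>
     (\<forall>S. S \<subseteq> \<tau> \<longrightarrow> (\<lambda>x. bSup ((\<lambda>f. f x) ` S)) \<in> \<tau>) \<and>
     (\<forall>f\<in>\<tau>. \<forall>g\<in>\<tau>. (\<lambda>x. bmeet (f x) (g x)) \<in> \<tau>)"

definition cut :: "('a \<Rightarrow> B4) \<Rightarrow> B4 \<Rightarrow> 'a set" where
  "cut f b = {x. bleq b (f x)}"

definition level :: "('a \<Rightarrow> B4) set \<Rightarrow> B4 \<Rightarrow> 'a set set" where
  "level \<tau> b = (\<lambda>f. cut f b) ` \<tau>"

definition level_top :: "('a \<Rightarrow> B4) set \<Rightarrow> B4 \<Rightarrow> 'a topology" where
  "level_top \<tau> b = topology (\<lambda>U. U \<in> level \<tau> b)"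

definition spec :: "('a \<Rightarrow> B4) set \<Rightarrow> 'a \<Rightarrow> 'a \<Rightarrow> B4" where
  "spec \<tau> x y = bInf ((\<lambda>f. bimp (f x) (f y)) ` \<tau>)"

definition B_R0 :: "('a \<Rightarrow> B4) set \<Rightarrow> bool" where
  "B_R0 \<tau> \<longleftrightarrow> (\<forall>x y. spec \<tau> x y = spec \<tau> y x)"

definition B_T0 :: "('a \<Rightarrow> B4) set \<Rightarrow> bool" where
  "B_T0 \<tau> \<longleftrightarrow> (\<forall>x y. spec \<tau> x y = Top \<and> spec \<tau> y x = Top \<longrightarrow> x = y)"

definition B_T1 :: "('a \<Rightarrow> B4) set \<Rightarrow> bool" where
  "B_T1 \<tau> \<longleftrightarrow> B_T0 \<tau> \<and> B_R0 \<tau>"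

definition R0_space :: "'a topology \<Rightarrow> bool" where
  "R0_space T \<longleftrightarrow> (\<forall>U x. openin T U \<and> x \<in> U \<longrightarrow> T closure_of {x} \<subseteq> U)"

end

theory Submission
  imports Defs
begin

text \<open>Whether \<open>a \<rightarrow> b\<close> lies above \<open>tt\<close> (resp. \<open>ff\<close>) only depends on whether \<open>a \<ge> tt\<close>
  implies \<open>b \<ge> tt\<close> (resp. the same for \<open>ff\<close>). Hence \<open>\<Omega>(\<tau>)(x,y)\<close> is read off from the two
  specialization preorders of \<open>\<tau>[tt]\<close> and \<open>\<tau>[ff]\<close> at \<open>(x,y)\<close>: \<open>\<Omega>(\<tau>)\<close> is symmetric iff both
  preorders are, i.e. iff both level topologies are R0; and \<open>\<Omega>(\<tau>)(x,y) = 1 = \<Omega>(\<tau>)(y,x)\<close> iff no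
  open set of \<open>\<tau>[tt]\<close> or \<open>\<tau>[ff]\<close> separates \<open>x\<close> from \<open>y\<close>, which is the failure of T0 for
  \<open>\<tau>[tt] \<or> \<tau>[ff]\<close>, since points not separated by a subbase are not separated by the topology
  it generates.\<close>

definition level_le :: "('a \<Rightarrow> B4) set \<Rightarrow> B4 \<Rightarrow> 'a \<Rightarrow> 'a \<Rightarrow> bool" where
  "level_le \<tau> c x y \<longleftrightarrow> (\<forall>f\<in>\<tau>. bleq c (f x) \<longrightarrow> bleq c (f y))"

lemma bleq_TT_iff: "bleq TT a \<longleftrightarrow> a \<notin> {Bot, FF}"
  by (cases a) auto

lemma bleq_FF_iff: "bleq FF a \<longleftrightarrow> a \<notin> {Bot, TT}"
  by (cases a) auto

lemma bimp_eq_Top_iff: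
  "bimp a b = Top \<longleftrightarrow> (bleq TT a \<longrightarrow> bleq TT b) \<and> (bleq FF a \<longrightarrow> bleq FF b)"
  by (cases a; cases b; simp add: bimp_def)

lemma bimp_in_TT_Top_iff: "bimp a b \<in> {Top, TT} \<longleftrightarrow> (bleq TT a \<longrightarrow> bleq TT b)"
  by (cases a; cases b; simp add: bimp_def)

lemma bimp_in_FF_Top_iff: "bimp a b \<in> {Top, FF} \<longleftrightarrow> (bleq FF a \<longrightarrow> bleq FF b)"
  by (cases a; cases b; simp add: bimp_def)

lemma spec_eq_level_le:
  "spec \<tau> x y =
     (if level_le \<tau> TT x y \<and> level_le \<tau> FF x y then Top
      else if level_le \<tau> TT x y then TT
      else if level_le \<tau> FF x y then FF else Bot)"
proof -
  let ?S = "(\<lambda>f. bimp (f x) (f y)) ` \<tau>"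
  have "?S \<subseteq> {Top} \<longleftrightarrow> level_le \<tau> TT x y \<and> level_le \<tau> FF x y"
    using bimp_eq_Top_iff unfolding level_le_def by blast
  moreover have "?S \<subseteq> {Top, TT} \<longleftrightarrow> level_le \<tau> TT x y"
    using bimp_in_TT_Top_iff unfolding level_le_def by blast
  moreover have "?S \<subseteq> {Top, FF} \<longleftrightarrow> level_le \<tau> FF x y"
    using bimp_in_FF_Top_iff unfolding level_le_def by blast
  ultimately show ?thesis
    unfolding spec_def bInf_def by simp
qed

lemma spec_eq_Top_iff: "spec \<tau> x y = Top \<longleftrightarrow> level_le \<tau> TT x y \<and> level_le \<tau> FF x y"
  by (simp add: spec_eq_level_le)

lemma B_R0_iff_level_le_sym:
  "B_R0 \<tau> \<longleftrightarrow> (\<forall>x y. level_le \<tau> TT x y = level_le \<tau> TT y x)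
                \<and> (\<forall>x y. level_le \<tau> FF x y = level_le \<tau> FF y x)"
  unfolding B_R0_def spec_eq_level_le by (auto split: if_splits)

lemma cut_bmeet:
  assumes "c \<in> {TT, FF}"
  shows "cut (\<lambda>x. bmeet (f x) (g x)) c = cut f c \<inter> cut g c"
proof -
  have "bleq c (bmeet a b) \<longleftrightarrow> bleq c a \<and> bleq c b" for a b
    using assms by (cases a; cases b) auto
  then show ?thesis
    unfolding cut_def by auto
qed

lemma cut_bSup:
  assumes "c \<in> {TT, FF}"
  shows "cut (\<lambda>x. bSup ((\<lambda>f. f x) ` F)) c = (\<Union>f\<in>F. cut f c)"
proof -
  have "bleq c (bSup A) \<longleftrightarrow> (\<exists>a\<in>A. bleq c a)" for A
    using assms by (auto simp: bSup_def bleq_TT_iff bleq_FF_iff)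
  then show ?thesis
    unfolding cut_def by auto
qed

lemma B_topology_const: "B_topology \<tau> \<Longrightarrow> (\<lambda>_. b) \<in> \<tau>"
  unfolding B_topology_def by blast

lemma B_topology_bSup: "B_topology \<tau> \<Longrightarrow> F \<subseteq> \<tau> \<Longrightarrow> (\<lambda>x. bSup ((\<lambda>f. f x) ` F)) \<in> \<tau>"
  unfolding B_topology_def by blast

lemma B_topology_bmeet:
  "B_topology \<tau> \<Longrightarrow> f \<in> \<tau> \<Longrightarrow> g \<in> \<tau> \<Longrightarrow> (\<lambda>x. bmeet (f x) (g x)) \<in> \<tau>"
  unfolding B_topology_def by blast

lemma istopology_level:
  assumes \<tau>: "B_topology \<tau>" and c: "c \<in> {TT, FF}"
  shows "istopology (\<lambda>U. U \<in> level \<tau> c)"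
  unfolding istopology_def
proof (intro conjI allI impI)
  fix U V assume "U \<in> level \<tau> c" "V \<in> level \<tau> c"
  then obtain f g where fg: "f \<in> \<tau>" "g \<in> \<tau>" and UV: "U = cut f c" "V = cut g c"
    unfolding level_def by auto
  have "U \<inter> V = cut (\<lambda>x. bmeet (f x) (g x)) c"
    unfolding UV cut_bmeet[OF c] ..
  then show "U \<inter> V \<in> level \<tau> c"
    unfolding level_def using B_topology_bmeet[OF \<tau> fg] by (rule image_eqI)
next
  fix K assume K: "\<forall>U\<in>K. U \<in> level \<tau> c"
  define F where "F = {f\<in>\<tau>. cut f c \<in> K}"
  have "\<Union>K = (\<Union>f\<in>F. cut f c)"
    using K unfolding F_def level_def by auto
  also have "\<dots> = cut (\<lambda>x. bSup ((\<lambda>f. f x) ` F)) c"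
    using cut_bSup[OF c] by (rule sym)
  finally show "\<Union>K \<in> level \<tau> c"
    unfolding level_def using B_topology_bSup[OF \<tau>, of F] F_def by auto
qed

lemma openin_level_top:
  assumes "B_topology \<tau>" "c \<in> {TT, FF}"
  shows "openin (level_top \<tau> c) U \<longleftrightarrow> U \<in> level \<tau> c"
  unfolding level_top_def using topology_inverse'[OF istopology_level[OF assms]] by simp

lemma UNIV_in_level:
  assumes "B_topology \<tau>" "c \<in> {TT, FF}"
  shows "UNIV \<in> level \<tau> c"
proof -
  have "(\<lambda>_. Top) \<in> \<tau>"
    using B_topology_const[OF assms(1)] .
  moreover have "cut (\<lambda>_. Top) c = UNIV"
    using assms(2) unfolding cut_def by auto
  ultimately show ?thesis
    unfolding level_def by (metis image_eqI)
qed

lemma topspace_level_top: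
  assumes "B_topology \<tau>" "c \<in> {TT, FF}"
  shows "topspace (level_top \<tau> c) = UNIV"
  using openin_level_top[OF assms] UNIV_in_level[OF assms] openin_subset
  by (metis top.extremum_uniqueI)

lemma in_closure_of_singleton_level_top:
  assumes "B_topology \<tau>" "c \<in> {TT, FF}"
  shows "y \<in> level_top \<tau> c closure_of {x} \<longleftrightarrow> level_le \<tau> c y x"
  unfolding closure_of_def topspace_level_top[OF assms] openin_level_top[OF assms]
    level_le_def level_def cut_def by auto

lemma R0_space_level_top_iff:
  assumes "B_topology \<tau>" "c \<in> {TT, FF}"
  shows "R0_space (level_top \<tau> c) \<longleftrightarrow> (\<forall>x y. level_le \<tau> c x y = level_le \<tau> c y x)"
proof -
  have "R0_space (level_top \<tau> c) \<longleftrightarrow>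
        (\<forall>f\<in>\<tau>. \<forall>x y. bleq c (f x) \<longrightarrow> level_le \<tau> c y x \<longrightarrow> bleq c (f y))"
    unfolding R0_space_def openin_level_top[OF assms] subset_iff
      in_closure_of_singleton_level_top[OF assms]
    by (auto simp: level_def cut_def)
  also have "\<dots> \<longleftrightarrow> (\<forall>x y. level_le \<tau> c x y = level_le \<tau> c y x)"
    unfolding level_le_def by blast
  finally show ?thesis .
qed

lemma generate_topology_on_indistinguishable:
  assumes "generate_topology_on \<S> U" "\<forall>V\<in>\<S>. x \<in> V \<longleftrightarrow> y \<in> V"
  shows "x \<in> U \<longleftrightarrow> y \<in> U"
  using assms by (induction rule: generate_topology_on.induct) auto

lemma t0_space_topology_generated_by_iff:
  "t0_space (topology_generated_by \<S>) \<longleftrightarrow>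
     (\<forall>x\<in>\<Union>\<S>. \<forall>y\<in>\<Union>\<S>. x \<noteq> y \<longrightarrow> (\<exists>V\<in>\<S>. x \<notin> V \<longleftrightarrow> y \<in> V))"
proof -
  have "(\<exists>U. generate_topology_on \<S> U \<and> (x \<notin> U \<longleftrightarrow> y \<in> U)) \<longleftrightarrow> (\<exists>V\<in>\<S>. x \<notin> V \<longleftrightarrow> y \<in> V)"
    for x y
  proof
    assume "\<exists>U. generate_topology_on \<S> U \<and> (x \<notin> U \<longleftrightarrow> y \<in> U)"
    then obtain U where U: "generate_topology_on \<S> U" "x \<notin> U \<longleftrightarrow> y \<in> U"
      by blast
    show "\<exists>V\<in>\<S>. x \<notin> V \<longleftrightarrow> y \<in> V"
    proof (rule ccontr)
      assume "\<not> (\<exists>V\<in>\<S>. x \<notin> V \<longleftrightarrow> y \<in> V)"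
      then have "\<forall>V\<in>\<S>. x \<in> V \<longleftrightarrow> y \<in> V"
        by blast
      then have "x \<in> U \<longleftrightarrow> y \<in> U"
        by (rule generate_topology_on_indistinguishable[OF U(1)])
      with U(2) show False
        by blast
    qed
  next
    assume "\<exists>V\<in>\<S>. x \<notin> V \<longleftrightarrow> y \<in> V"
    then show "\<exists>U. generate_topology_on \<S> U \<and> (x \<notin> U \<longleftrightarrow> y \<in> U)"
      using generate_topology_on.Basis by metis
  qed
  then show ?thesis
    unfolding t0_space_def topology_generated_by_topspace openin_topology_generated_by_iff
    by simp
qed

lemma level_separates_iff:
  "(\<exists>V\<in>level \<tau> c. x \<notin> V \<longleftrightarrow> y \<in> V) \<longleftrightarrow> \<not> (level_le \<tau> c x y \<and> level_le \<tau> c y x)"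
  unfolding level_le_def level_def cut_def by force

lemma B_T0_iff_t0_space:
  assumes "B_topology \<tau>"
  shows "B_T0 \<tau> \<longleftrightarrow> t0_space (topology_generated_by (level \<tau> TT \<union> level \<tau> FF))"
proof -
  have "\<Union>(level \<tau> TT \<union> level \<tau> FF) = UNIV"
    using UNIV_in_level[OF assms, of TT] by auto
  moreover have "(\<exists>V\<in>level \<tau> TT \<union> level \<tau> FF. x \<notin> V \<longleftrightarrow> y \<in> V) \<longleftrightarrow>
      \<not> (spec \<tau> x y = Top \<and> spec \<tau> y x = Top)" for x y
    unfolding spec_eq_Top_iff bex_Un level_separates_iff by blast
  ultimately show ?thesis
    unfolding t0_space_topology_generated_by_iff B_T0_def by auto
qed

theorem mainTheorem13:
  fixes \<tau> :: "('a \<Rightarrow> B4) set"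
  assumes "B_topology \<tau>"
  shows "(B_R0 \<tau> \<longleftrightarrow> R0_space (level_top \<tau> TT) \<and> R0_space (level_top \<tau> FF))
       \<and> (B_T1 \<tau> \<longleftrightarrow>
            t0_space (topology_generated_by (level \<tau> TT \<union> level \<tau> FF))
            \<and> R0_space (level_top \<tau> TT) \<and> R0_space (level_top \<tau> FF))"
proof -
  have R0: "B_R0 \<tau> \<longleftrightarrow> R0_space (level_top \<tau> TT) \<and> R0_space (level_top \<tau> FF)"
    unfolding B_R0_iff_level_le_sym using R0_space_level_top_iff[OF assms] by simp
  then show ?thesis
    unfolding B_T1_def B_T0_iff_t0_space[OF assms] by blast
qed

end
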